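(* Let $(z,z')$ be admissible and $t=zz'$. For every $\zeta\in\mathbb C$, $$\int_{-1}^1\Phi(t+1;\zeta x)\,\sigma^{(zz')}_1(dx)=\Phi(z+1;\zeta)\,\Phi(-z'+1;-\zeta)=\Phi(z'+1;\zeta)\,\Phi(-z+1;-\zeta),$$ where $\Phi(a;\zeta)={}_1F_1(a;2;\zeta)=\sum_{k\ge0}\frac{(a)_k}{(k+1)!\,k!}\zeta^k$.
   Context: $\sigma^{(zz')}_1$ is the first controlling measure of the spectral $z$-measure $P_{zz'}$; equivalently (and this characterizes it) it is the unique measure on $[-1,1]$ with moments $\int x^l\sigma^{(zz')}_1(dx)=\sum_{p+q=l,\ p,q\ge0}\frac{(-1)^q\,t\,(z+1)_p(-z+1)_q(z'+1)_p(-z'+1)_q}{(t)_{p+q+1}(p+q+1)p!q!}$ for $l=0,1,2,\dots$. Admissible parameters: either $z'=\bar z$, $z\notin\mathbb Z$, or $z,z'$ real in a common interval $(m,m+1)$, $m\in\mathbb Z$. $(a)_n=a(a+1)\cdots(a+n-1)$. *)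

theory Defs
  imports "HOL-Analysis.Analysis"
begin

definition Phi :: "complex \<Rightarrow> complex \<Rightarrow> complex" where
  "Phi a \<zeta> = (\<Sum>k. pochhammer a k / (of_nat (fact (k+1)) * of_nat (fact k)) * \<zeta> ^ k)"

definition admissible :: "complex \<Rightarrow> complex \<Rightarrow> bool" where
  "admissible z z' \<longleftrightarrow>
     (z' = cnj z \<and> z \<notin> \<int>) \<or>
     (z \<in> \<real> \<and> z' \<in> \<real> \<and>
      (\<exists>m::int. of_int m < Re z \<and> Re z < of_int m + 1 \<and>
                 of_int m < Re z' \<and> Re z' < of_int m + 1))"

definition sigma1_moment :: "complex \<Rightarrow> complex \<Rightarrow> nat \<Rightarrow> complex" where
  "sigma1_moment z z' l =
     (let t = z * z' in
      \<Sum>p\<le>l. let q = l - p in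
        (-1) ^ q * t * pochhammer (z + 1) p * pochhammer (- z + 1) q
          * pochhammer (z' + 1) p * pochhammer (- z' + 1) q
        / (pochhammer t (p + q + 1) * of_nat (p + q + 1) * of_nat (fact p) * of_nat (fact q)))"

text \<open>M is (the) first controlling measure sigma_1^{(z z')}: a finite Borel measure on the
  reals concentrated on [-1,1] with the prescribed moments (which characterize it uniquely).\<close>
definition is_sigma1 :: "complex \<Rightarrow> complex \<Rightarrow> real measure \<Rightarrow> bool" where
  "is_sigma1 z z' M \<longleftrightarrow>
     sets M = sets borel \<and> finite_measure M \<and> emeasure M (- {-1..1}) = 0 \<and>
     (\<forall>l. complex_of_real (integral\<^sup>L M (\<lambda>x. x ^ l)) = sigma1_moment z z' l)"

end

theory Submission
  imports Defs "HOL-Real_Asymp.Real_Asymp"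
begin

text \<open>Expand Phi(t+1; zeta x) in powers of x and integrate termwise against sigma_1, which is
  legitimate because sigma_1 lives on [-1,1] and the series converges absolutely. In the k-th
  moment the factor t / (t)_(k+1) cancels (t+1)_k, so the k-th coefficient of the integral is
  zeta^k / k! times the sum over p of C(k,p) (-1)^(k-p) F_z(k-p,p) F_z'(k-p,p), where
  F_z(q,p) = (-z+1)_q (z+1)_p / (p+q+1)!. Since (-z+1+q) + (z+1+p) = p+q+2, these arrays satisfy
  Pascal's recurrence F(q,p) = F(q+1,p) + F(q,p+1), and for any two such arrays F, G the
  alternating binomial sum of F(k-p,p) G(k-p,p) equals that of F(0,p) G(k-p,0). The latter is
  the k-th Cauchy-product coefficient of Phi(z+1; zeta) Phi(-z'+1; -zeta). The former is
  symmetric in z and z', which gives the second equality.\<close>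

lemma sum_atMost_reflect: "(\<Sum>i\<le>(l::nat). g i) = (\<Sum>i\<le>l. g (l - i))"
  by (simp add: atMost_atLeast0 sum.atLeastAtMost_rev[of g 0])

lemma sum_choose_Suc_split:
  fixes g :: "nat \<Rightarrow> 'a::comm_ring_1"
  shows "(\<Sum>j\<le>Suc n. of_nat (Suc n choose j) * g j)
       = (\<Sum>j\<le>n. of_nat (n choose j) * g j) + (\<Sum>j\<le>n. of_nat (n choose j) * g (Suc j))"
proof -
  have "(\<Sum>j\<le>Suc n. of_nat (Suc n choose j) * g j)
      = g 0 + (\<Sum>j\<le>n. of_nat (n choose Suc j) * g (Suc j))
          + (\<Sum>j\<le>n. of_nat (n choose j) * g (Suc j))"
    by (subst sum.atMost_Suc_shift) (simp add: sum.distrib algebra_simps)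
  also have "g 0 + (\<Sum>j\<le>n. of_nat (n choose Suc j) * g (Suc j))
      = (\<Sum>j\<le>Suc n. of_nat (n choose j) * g j)"
    by (subst sum.atMost_Suc_shift) simp
  also have "\<dots> = (\<Sum>j\<le>n. of_nat (n choose j) * g j)"
    by (simp add: binomial_eq_0)
  finally show ?thesis .
qed

definition pascal_recurrence :: "(nat \<Rightarrow> nat \<Rightarrow> 'a::comm_ring_1) \<Rightarrow> bool" where
  "pascal_recurrence F \<longleftrightarrow> (\<forall>q p. F q p = F (Suc q) p + F q (Suc p))"

lemma pascal_recurrence_expand:
  fixes F :: "nat \<Rightarrow> nat \<Rightarrow> 'a::comm_ring_1"
  assumes "pascal_recurrence F"
  shows "F q p = (\<Sum>j\<le>p. of_nat (p choose j) * ((-1)^j * F (q + j) 0))"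
proof (induction p arbitrary: q)
  case 0
  then show ?case by simp
next
  case (Suc p)
  have "F q (Suc p) = F q p - F (Suc q) p"
    using assms unfolding pascal_recurrence_def by (metis add_diff_cancel_left')
  then show ?case
    unfolding sum_choose_Suc_split Suc.IH[of q] Suc.IH[of "Suc q"]
    by (simp add: sum_negf[symmetric])
qed

lemma pascal_recurrence_diagonal_sum:
  fixes F :: "nat \<Rightarrow> nat \<Rightarrow> 'a::comm_ring_1"
  assumes "pascal_recurrence F"
  shows "(\<Sum>q\<le>n. of_nat (n choose q) * F q (m + n - q)) = F 0 m"
proof (induction n)
  case 0
  then show ?case by simp
next
  case (Suc n)
  have step: "F q (Suc (m + n - q)) + F (Suc q) (m + n - q) = F q (m + n - q)" for q
    using assms unfolding pascal_recurrence_def by (metis add.commute)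
  have "(\<Sum>q\<le>Suc n. of_nat (Suc n choose q) * F q (m + Suc n - q))
     = (\<Sum>q\<le>n. of_nat (n choose q) * F q (m + Suc n - q))
       + (\<Sum>q\<le>n. of_nat (n choose q) * F (Suc q) (m + n - q))"
    by (subst sum_choose_Suc_split) simp
  also have "\<dots>
      = (\<Sum>q\<le>n. of_nat (n choose q) * (F q (Suc (m + n - q)) + F (Suc q) (m + n - q)))"
    by (simp add: distrib_left sum.distrib Suc_diff_le)
  also have "\<dots> = (\<Sum>q\<le>n. of_nat (n choose q) * F q (m + n - q))"
    by (simp only: step)
  finally show ?case using Suc.IH by simp
qed

text \<open>Expand G along its first row, regroup the triangular double sum by the first index of G,
  and collapse the F-part with the diagonal sum.\<close>

lemma pascal_recurrence_product_sum:
  fixes F G :: "nat \<Rightarrow> nat \<Rightarrow> 'a::comm_ring_1"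
  assumes "pascal_recurrence F" "pascal_recurrence G"
  shows "(\<Sum>p\<le>l. of_nat (l choose p) * (-1)^(l-p) * F (l-p) p * G (l-p) p)
       = (\<Sum>p\<le>l. of_nat (l choose p) * (-1)^(l-p) * F 0 p * G (l-p) 0)"
proof -
  define h where
    "h q k = of_nat (l choose q) * of_nat ((l-q) choose k) * (-1)^(q+k) * F q (l-q) * G (q+k) 0"
    for q k
  have "(\<Sum>p\<le>l. of_nat (l choose p) * (-1)^(l-p) * F (l-p) p * G (l-p) p)
      = (\<Sum>q\<le>l. of_nat (l choose q) * (-1)^q * F q (l-q) * G q (l-q))"
    by (subst sum_atMost_reflect) (intro sum.cong, auto simp: binomial_symmetric[symmetric])
  also have "\<dots> = (\<Sum>q\<le>l. \<Sum>k\<le>l-q. h q k)"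
    unfolding h_def pascal_recurrence_expand[OF assms(2), of _ "l - _"]
    by (simp add: sum_distrib_left power_add mult_ac)
  also have "\<dots> = (\<Sum>(q,k)\<in>{(q,k). q+k \<le> l}. h q k)"
    by (subst sum.Sigma) (auto intro!: sum.cong)
  also have "\<dots> = (\<Sum>n\<le>l. \<Sum>q\<le>n. h q (n - q))"
    by (rule sum.triangle_reindex_eq)
  also have "\<dots> = (\<Sum>n\<le>l. of_nat (l choose n) * (-1)^n * G n 0 *
                        (\<Sum>q\<le>n. of_nat (n choose q) * F q ((l - n) + n - q)))"
  proof (intro sum.cong refl)
    fix n assume n: "n \<in> {..l}"
    show "(\<Sum>q\<le>n. h q (n - q)) = of_nat (l choose n) * (-1)^n * G n 0 *
            (\<Sum>q\<le>n. of_nat (n choose q) * F q ((l - n) + n - q))"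
      unfolding sum_distrib_left
    proof (intro sum.cong refl)
      fix q assume q: "q \<in> {..n}"
      have "(l choose n) * (n choose q) = (l choose q) * ((l - q) choose (n - q))"
        using n q by (intro choose_mult) auto
      then have "of_nat (l choose q) * of_nat ((l - q) choose (n - q))
          = (of_nat (l choose n) * of_nat (n choose q) :: 'a)"
        by (metis of_nat_mult)
      moreover have "(l - n) + n - q = l - q" "q + (n - q) = n" using n q by auto
      ultimately show "h q (n - q)
          = of_nat (l choose n) * (-1)^n * G n 0 * (of_nat (n choose q) * F q ((l - n) + n - q))"
        unfolding h_def by (simp add: mult_ac)
    qed
  qed
  also have "\<dots> = (\<Sum>n\<le>l. of_nat (l choose n) * (-1)^n * G n 0 * F 0 (l - n))"
    by (simp only: pascal_recurrence_diagonal_sum[OF assms(1)])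
  also have "\<dots> = (\<Sum>p\<le>l. of_nat (l choose p) * (-1)^(l-p) * F 0 p * G (l-p) 0)"
    by (subst sum_atMost_reflect) (intro sum.cong, auto simp: binomial_symmetric[symmetric] mult_ac)
  finally show ?thesis .
qed

definition phi_array :: "complex \<Rightarrow> nat \<Rightarrow> nat \<Rightarrow> complex" where
  "phi_array z q p = pochhammer (- z + 1) q * pochhammer (z + 1) p / of_nat (fact (p + q + 1))"

lemma pascal_recurrence_phi_array: "pascal_recurrence (phi_array z)"
  unfolding pascal_recurrence_def
proof (intro allI)
  fix q p
  have split_fraction: "X * Y / D = X * A * Y / (N * D) + X * (Y * B) / (N * D)"
    if "A + B = N" "N \<noteq> 0" "D \<noteq> 0" for X Y A B N D :: complex
    using that by (simp add: field_simps flip: distrib_right)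
  define D where "D = (of_nat (fact (p + q + 1)) :: complex)"
  have nonzero: "D \<noteq> 0" "(of_nat (p + q + 2) :: complex) \<noteq> 0"
    unfolding D_def by (simp_all only: of_nat_eq_0_iff fact_nonzero) simp
  have fact_Suc: "of_nat (fact (p + Suc q + 1)) = of_nat (p + q + 2) * D"
    "of_nat (fact (Suc p + q + 1)) = of_nat (p + q + 2) * D"
    unfolding D_def by (simp_all add: algebra_simps)
  show "phi_array z q p = phi_array z (Suc q) p + phi_array z q (Suc p)"
    unfolding phi_array_def pochhammer_Suc fact_Suc D_def[symmetric]
  proof (rule split_fraction)
    show "- z + 1 + of_nat q + (z + 1 + of_nat p) = of_nat (p + q + 2)"
      by simp
  qed (use nonzero in auto)
qed

definition Phi_term :: "complex \<Rightarrow> nat \<Rightarrow> complex \<Rightarrow> complex" where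
  "Phi_term a k \<zeta> = pochhammer a k / (of_nat (fact (k + 1)) * of_nat (fact k)) * \<zeta> ^ k"

lemma Phi_eq_suminf_Phi_term: "Phi a \<zeta> = (\<Sum>k. Phi_term a k \<zeta>)"
  unfolding Phi_def Phi_term_def ..

lemma Phi_term_mult_of_real:
  "Phi_term a k (\<zeta> * complex_of_real x) = Phi_term a k \<zeta> * complex_of_real (x ^ k)"
  unfolding Phi_term_def by (simp add: power_mult_distrib)

lemma Phi_term_Suc:
  "Phi_term a (Suc k) \<zeta>
     = Phi_term a k \<zeta> * ((a + of_nat k) * \<zeta> / (of_nat (k + 2) * of_nat (k + 1)))"
proof -
  have "(of_nat (fact (k + 1)) :: complex) \<noteq> 0" "(of_nat (fact k) :: complex) \<noteq> 0"
    "(of_nat (k + 2) :: complex) \<noteq> 0" "(of_nat (k + 1) :: complex) \<noteq> 0"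
    by (simp_all only: of_nat_eq_0_iff fact_nonzero) simp_all
  moreover have "(of_nat (fact (k + 2)) :: complex) = of_nat (fact (k + 1)) * of_nat (k + 2)"
    "(of_nat (fact (Suc k)) :: complex) = of_nat (fact k) * of_nat (k + 1)"
    by (simp_all add: algebra_simps)
  ultimately show ?thesis
    unfolding Phi_term_def pochhammer_Suc by (simp add: field_simps)
qed

lemma summable_norm_Phi_term: "summable (\<lambda>k. norm (Phi_term a k \<zeta>))"
proof -
  define r where "r k = (norm a + real k) * norm \<zeta> / ((real k + 2) * (real k + 1))" for k
  have "(r \<longlongrightarrow> 0) at_top"
    unfolding r_def by real_asymp
  then have "eventually (\<lambda>k. r k < 1/2) at_top"
    by (rule order_tendstoD(2)) simp
  then obtain N where N: "\<And>k. k \<ge> N \<Longrightarrow> r k < 1/2"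
    by (auto simp: eventually_at_top_linorder)
  show ?thesis
  proof (rule summable_ratio_test[of "1/2" N])
    fix k assume "k \<ge> N"
    have "norm ((a + of_nat k) * \<zeta> / (of_nat (k + 2) * of_nat (k + 1)))
        = norm (a + of_nat k) * norm \<zeta> / ((real k + 2) * (real k + 1))"
      by (simp only: norm_mult norm_divide norm_of_nat) (simp add: add.commute)
    also have "\<dots> \<le> r k"
      unfolding r_def by (intro divide_right_mono mult_right_mono) (auto intro: norm_triangle_le)
    also have "\<dots> \<le> 1/2"
      using N[OF \<open>k \<ge> N\<close>] by simp
    finally have "norm (Phi_term a k \<zeta>)
          * norm ((a + of_nat k) * \<zeta> / (of_nat (k + 2) * of_nat (k + 1)))
        \<le> norm (Phi_term a k \<zeta>) * (1/2)"
      by (rule mult_left_mono) simp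
    then show "norm (norm (Phi_term a (Suc k) \<zeta>)) \<le> 1/2 * norm (norm (Phi_term a k \<zeta>))"
      unfolding Phi_term_Suc[of a k] norm_mult by simp
  qed simp
qed

definition Phi_product_coeff :: "complex \<Rightarrow> complex \<Rightarrow> nat \<Rightarrow> complex" where
  "Phi_product_coeff z w l =
     (\<Sum>p\<le>l. of_nat (l choose p) * (-1)^(l-p) * phi_array z (l-p) p * phi_array w (l-p) p)"

lemma Phi_product_coeff_commute: "Phi_product_coeff z w l = Phi_product_coeff w z l"
  unfolding Phi_product_coeff_def by (simp add: mult_ac)

lemma Phi_term_eq_phi_array:
  "Phi_term (z + 1) p \<zeta> = phi_array z 0 p * \<zeta>^p / fact p"
  "Phi_term (- z + 1) q \<zeta> = phi_array z q 0 * \<zeta>^q / fact q"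
  unfolding Phi_term_def phi_array_def by simp_all

lemma Cauchy_coeff_Phi_term:
  "(\<Sum>p\<le>k. Phi_term (z + 1) p \<zeta> * Phi_term (- w + 1) (k - p) (- \<zeta>))
     = \<zeta>^k / fact k *
       (\<Sum>p\<le>k. of_nat (k choose p) * (-1)^(k-p) * phi_array z 0 p * phi_array w (k-p) 0)"
  \<comment> \<open>the second equation first: the first one also matches \<open>- w + 1\<close>, with \<open>z := - w\<close>\<close>
  unfolding sum_distrib_left Phi_term_eq_phi_array(2)
  unfolding Phi_term_eq_phi_array(1)
proof (intro sum.cong refl)
  fix p assume "p \<in> {..k}"
  then obtain q where k: "k = p + q" by (auto simp: le_iff_add)
  have fact_k: "fact p * fact q * of_nat ((p + q) choose p) = (fact (p + q) :: complex)"
    using binomial_fact_lemma[of p "p + q"]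
    by (metis add_diff_cancel_left' le_add1 of_nat_fact of_nat_mult)
  have rearrange: "a * x / P * (b * (s * y) / Q) = x * y / K * (C * s * a * b)"
    if "P * Q * C = K" "K \<noteq> 0" for a b s x y P Q C K :: complex
    using that by (auto simp: field_simps)
  show "phi_array z 0 p * \<zeta>^p / fact p
      * (phi_array w (k - p) 0 * (- \<zeta>)^(k - p) / fact (k - p))
    = \<zeta>^k / fact k * (of_nat (k choose p) * (-1)^(k-p) * phi_array z 0 p * phi_array w (k-p) 0)"
    unfolding k add_diff_cancel_left' power_minus[of \<zeta>] power_add
    by (rule rearrange[OF fact_k fact_nonzero])
qed

lemma Phi_product_eq_suminf:
  "Phi (z + 1) \<zeta> * Phi (- w + 1) (- \<zeta>) = (\<Sum>k. \<zeta>^k / fact k * Phi_product_coeff z w k)"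
proof -
  have "Phi (z + 1) \<zeta> * Phi (- w + 1) (- \<zeta>)
      = (\<Sum>k. \<Sum>p\<le>k. Phi_term (z + 1) p \<zeta> * Phi_term (- w + 1) (k - p) (- \<zeta>))"
    unfolding Phi_eq_suminf_Phi_term
    by (rule Cauchy_product[OF summable_norm_Phi_term summable_norm_Phi_term])
  also have "\<dots> = (\<Sum>k. \<zeta>^k / fact k * Phi_product_coeff z w k)"
    unfolding Cauchy_coeff_Phi_term Phi_product_coeff_def
    by (simp only: pascal_recurrence_product_sum[OF pascal_recurrence_phi_array pascal_recurrence_phi_array])
  finally show ?thesis .
qed

lemma Phi_term_mult_sigma1_moment:
  assumes "pochhammer (z * w) (Suc l) \<noteq> 0"
  shows "Phi_term (z * w + 1) l \<zeta> * sigma1_moment z w l = \<zeta>^l / fact l * Phi_product_coeff z w l"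
  unfolding sigma1_moment_def Let_def Phi_product_coeff_def sum_distrib_left
proof (intro sum.cong refl)
  fix p assume "p \<in> {..l}"
  define q where "q = l - p"
  define t where "t = z * w"
  have l: "p + q = l"
    using \<open>p \<in> {..l}\<close> unfolding q_def by simp
  have poch: "pochhammer t (l + 1) = t * pochhammer (t + 1) l"
    by (simp add: pochhammer_rec)
  then have nonzero: "t \<noteq> 0" "pochhammer (t + 1) l \<noteq> 0"
    using assms unfolding t_def by auto
  have fact_Suc: "fact (l + 1) = of_nat (l + 1) * (fact l :: complex)"
    by simp
  have Suc_nonzero: "(of_nat (l + 1) :: complex) \<noteq> 0"
    by (simp only: of_nat_eq_0_iff add_eq_0_iff_both_eq_0 one_neq_zero) simp
  have binomial: "fact p * fact q * of_nat (l choose p) = (fact l :: complex)"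
    using binomial_fact_lemma[of p l] l by (metis le_add1 of_nat_fact of_nat_mult q_def)
  have rearrange: "P / (F1 * F0) * x * (s * t * a * b * c * d / (T * N * fp * fq))
      = x / F0 * (C * s * (b * a / F1) * (d * c / F1))"
    if "T = t * P" "F1 = N * F0" "fp * fq * C = F0"
      and "t \<noteq> 0" "P \<noteq> 0" "N \<noteq> 0" "F0 \<noteq> 0"
    for P F1 F0 x s a b c d T N fp fq C :: complex
    using that by (auto simp: field_simps)
  show "Phi_term (z * w + 1) l \<zeta> *
        ((- 1) ^ (l - p) * (z * w) * pochhammer (z + 1) p * pochhammer (- z + 1) (l - p) *
         pochhammer (w + 1) p * pochhammer (- w + 1) (l - p) /
         (pochhammer (z * w) (p + (l - p) + 1) * of_nat (p + (l - p) + 1) *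
          of_nat (fact p) * of_nat (fact (l - p))))
      = \<zeta> ^ l / fact l *
        (of_nat (l choose p) * (- 1) ^ (l - p) * phi_array z (l - p) p * phi_array w (l - p) p)"
    unfolding Phi_term_def phi_array_def t_def[symmetric] of_nat_fact q_def[symmetric] l
    by (rule rearrange[OF poch fact_Suc binomial nonzero Suc_nonzero fact_nonzero])
qed

lemma integral_suminf_powers:
  fixes M :: "real measure" and c :: "nat \<Rightarrow> complex"
  assumes sets_M: "sets M = sets borel" and "finite_measure M"
    and support: "AE x in M. \<bar>x\<bar> \<le> 1"
    and summable: "summable (\<lambda>k. norm (c k))"
  shows "(LINT x|M. (\<Sum>k. c k * complex_of_real (x ^ k)))
       = (\<Sum>k. c k * complex_of_real (LINT x|M. x ^ k))"
proof -
  interpret finite_measure M by fact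
  have measurable_M: "measurable M N = measurable borel N" for N :: "'b measure"
    by (rule measurable_cong_sets[OF sets_M refl])
  have power_bound: "AE x in M. \<bar>x\<bar> ^ k \<le> 1" for k
    using support by eventually_elim (auto intro: power_le_one)
  have integrable_power: "integrable M (\<lambda>x. x ^ k)" for k
    by (rule integrable_const_bound[where B=1])
       (use power_bound in \<open>auto simp: measurable_M power_abs\<close>)
  have integrable_term: "integrable M (\<lambda>x. c k * complex_of_real (x ^ k))" for k
    by (intro integrable_mult_right integrable_of_real integrable_power)
  have integral_norm_term:
    "(LINT x|M. norm (c k * complex_of_real (x ^ k))) \<le> norm (c k) * measure M (space M)" for k
  proof -
    have "(LINT x|M. norm (c k * complex_of_real (x ^ k))) = norm (c k) * (LINT x|M. \<bar>x\<bar> ^ k)"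
      by (simp add: norm_mult norm_power)
    also have "\<dots> \<le> norm (c k) * (LINT x|M. 1)"
      by (intro mult_left_mono integral_mono_AE)
         (use power_bound integrable_abs[OF integrable_power] in \<open>auto simp: power_abs\<close>)
    finally show ?thesis by simp
  qed
  have "(LINT x|M. (\<Sum>k. c k * complex_of_real (x ^ k)))
      = (\<Sum>k. LINT x|M. c k * complex_of_real (x ^ k))"
  proof (rule integral_suminf[OF integrable_term])
    show "AE x in M. summable (\<lambda>k. norm (c k * complex_of_real (x ^ k)))"
      using support
    proof eventually_elim
      case (elim x)
      show ?case
        by (rule summable_comparison_test[OF _ summable])
           (use elim in \<open>auto simp: norm_mult norm_power
              intro!: exI[of _ 0] mult_left_le power_le_one\<close>)
    qed
    show "summable (\<lambda>k. LINT x|M. norm (c k * complex_of_real (x ^ k)))"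
      by (rule summable_comparison_test[OF _ summable_mult2[OF summable]])
         (use integral_norm_term in \<open>auto intro!: exI[of _ 0]\<close>)
  qed
  then show ?thesis
    by (simp only: integral_mult_right_zero integral_complex_of_real)
qed

lemma Re_mult_pos_if_admissible:
  assumes "admissible z z'"
  shows "Re (z * z') > 0"
  using assms unfolding admissible_def
proof (elim disjE conjE exE)
  assume "z' = cnj z" "z \<notin> \<int>"
  then have "z \<noteq> 0" "Re (z * z') = (cmod z)\<^sup>2"
    by (auto simp: complex_mult_cnj cmod_power2)
  then show ?thesis
    by simp
next
  fix m :: int
  assume "z \<in> \<real>" "z' \<in> \<real>" "of_int m < Re z" "Re z < of_int m + 1"
    "of_int m < Re z'" "Re z' < of_int m + 1"
  then show ?thesis
    by (cases "m \<ge> 0") (auto simp: complex_is_Real_iff mult_pos_pos mult_neg_neg)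
qed

lemma pochhammer_nonzero_if_Re_pos:
  assumes "Re t > 0"
  shows "pochhammer t n \<noteq> 0"
  using assms by (auto simp: pochhammer_eq_0_iff)

theorem theorem5p2:
  fixes z z' \<zeta> :: complex and M :: "real measure"
  assumes "admissible z z'"
    and "is_sigma1 z z' M"
  shows "(LINT x|M. Phi (z * z' + 1) (\<zeta> * complex_of_real x))
           = Phi (z + 1) \<zeta> * Phi (- z' + 1) (- \<zeta>)
         \<and> Phi (z + 1) \<zeta> * Phi (- z' + 1) (- \<zeta>)
           = Phi (z' + 1) \<zeta> * Phi (- z + 1) (- \<zeta>)"
proof
  have sets_M: "sets M = sets borel" and "finite_measure M"
    and null: "emeasure M (- {-1..1}) = 0"
    and moments: "\<And>l. complex_of_real (LINT x|M. x ^ l) = sigma1_moment z z' l"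
    using assms(2) unfolding is_sigma1_def by auto
  have support: "AE x in M. \<bar>x\<bar> \<le> 1"
    by (rule AE_I[OF _ null]) (auto simp: sets_M)
  have poch_nonzero: "pochhammer (z * z') (Suc l) \<noteq> 0" for l
    by (rule pochhammer_nonzero_if_Re_pos[OF Re_mult_pos_if_admissible[OF assms(1)]])
  have "(LINT x|M. Phi (z * z' + 1) (\<zeta> * complex_of_real x))
      = (LINT x|M. (\<Sum>k. Phi_term (z * z' + 1) k \<zeta> * complex_of_real (x ^ k)))"
    unfolding Phi_eq_suminf_Phi_term Phi_term_mult_of_real ..
  also have "\<dots> = (\<Sum>k. Phi_term (z * z' + 1) k \<zeta> * sigma1_moment z z' k)"
    unfolding moments[symmetric]
    by (rule integral_suminf_powers[OF sets_M \<open>finite_measure M\<close> support summable_norm_Phi_term])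
  also have "\<dots> = (\<Sum>k. \<zeta>^k / fact k * Phi_product_coeff z z' k)"
    unfolding Phi_term_mult_sigma1_moment[OF poch_nonzero] ..
  also have "\<dots> = Phi (z + 1) \<zeta> * Phi (- z' + 1) (- \<zeta>)"
    by (rule Phi_product_eq_suminf[symmetric])
  finally show "(LINT x|M. Phi (z * z' + 1) (\<zeta> * complex_of_real x))
      = Phi (z + 1) \<zeta> * Phi (- z' + 1) (- \<zeta>)" .
  show "Phi (z + 1) \<zeta> * Phi (- z' + 1) (- \<zeta>) = Phi (z' + 1) \<zeta> * Phi (- z + 1) (- \<zeta>)"
    unfolding Phi_product_eq_suminf Phi_product_coeff_commute[of z] ..
qed

end
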